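(* Let $M>0$, $l,p\in\mathbb N$, and $0<\lambda<\min\{1,1/\widetilde M\}$ where $\widetilde M=\sum_{j=0}^pM^j$. Consider the SigSAS state map $F^{\rm SigSAS}_{\lambda,l,p}:T^{l+1}(\mathbb R^{p+1})\times\mathbb R\to T^{l+1}(\mathbb R^{p+1})$, $F^{\rm SigSAS}_{\lambda,l,p}(\mathbf x,z)=\lambda\pi_l(\mathbf x)\otimes\widetilde{\mathbf z}+\widehat{\mathbf z}^0$, with inputs $z\in[-M,M]$. Then: (1) for all $\mathbf x_1,\mathbf x_2$ and $z\in[-M,M]$, $\|F^{\rm SigSAS}_{\lambda,l,p}(\mathbf x_1,z)-F^{\rm SigSAS}_{\lambda,l,p}(\mathbf x_2,z)\|\le\lambda\widetilde M\|\mathbf x_1-\mathbf x_2\|$, with $\lambda\widetilde M<1$; (2) with $L:=\widetilde M/(1-\lambda\widetilde M)$, $F^{\rm SigSAS}_{\lambda,l,p}$ maps $\overline{B(\mathbf 0,L)}\times[-M,M]$ into $\overline{B(\mathbf 0,L)}$; (3) the state system $\mathbf x_t=F^{\rm SigSAS}_{\lambda,l,p}(\mathbf x_{t-1},z_t)$ with inputs in $K_M=[-M,M]^{\mathbb Z_-}$ has the echo state property and the fading memory property, and its (continuous, causal, time-invariant) filter $U^{\rm SigSAS}_{\lambda,l,p}:K_M\to K_L$ is given, for $\mathbf z\in K_M$, $t\in\mathbb Z_-$, by $$U^{\rm SigSAS}_{\lambda,l,p}(\mathbf z)_t=\frac{\lambda^{l+1}}{1-\lambda}\widehat{\mathbf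 z}_t+\sum_{j=0}^{l}\lambda^j\Phi_j(\mathbf z)_t,$$ where $\Phi_j(\mathbf z)_t:=\Psi^{(j)}$ is defined recursively by $\Psi^{(0)}=\widehat{\mathbf z}^0_{t-j}$ and $\Psi^{(r)}=\pi_l(\Psi^{(r-1)})\otimes\widetilde{\mathbf z}_{t-j+r}$ for $r=1,\dots,j$ (so $\Phi_0(\mathbf z)_t=\widehat{\mathbf z}^0_t$, $\Phi_1(\mathbf z)_t=\pi_l(\widehat{\mathbf z}^0_{t-1})\otimes\widetilde{\mathbf z}_t$, etc.).
   Context: $\mathbb Z_-=\{\dots,-1,0\}$. $T^{l+1}(\mathbb R^{p+1})=(\mathbb R^{p+1})^{\otimes(l+1)}$ with canonical basis $\mathbf e_{i_1}\otimes\cdots\otimes\mathbf e_{i_{l+1}}$, $i_r\in\{1,\dots,p+1\}$ ($\mathbf e_i$ the canonical basis of $\mathbb R^{p+1}$), endowed with the Euclidean norm of the coefficient array (the norm of the inner product making the canonical basis orthonormal; a crossnorm); $B(\mathbf 0,L)$ denotes balls in this norm. The order-lowering map $\pi_l:T^{l+1}(\mathbb R^{p+1})\to T^{l}(\mathbb R^{p+1})$ is linear with $\pi_l(\sum a_{i_1\dots i_{l+1}}\mathbf e_{i_1}\otimes\cdots\otimes\mathbf e_{i_{l+1}})=\sum a_{1,i_2\dots i_{l+1}}\mathbf e_{i_2}\otimes\cdots\otimes\mathbf e_{i_{l+1}}$. For $z\in\mathbb R$, $\widetilde{\mathbf z}:=\sum_{i=1}^{p+1}z^{i-1}\mathbf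 e_i\in\mathbb R^{p+1}$; for a sequence $\mathbf z=(z_t)_{t\in\mathbb Z_-}$, $\widetilde{\mathbf z}_t$ is this vector for $z_t$ and $\widehat{\mathbf z}_t:=\widetilde{\mathbf z}_{t-l}\otimes\cdots\otimes\widetilde{\mathbf z}_t\in T^{l+1}(\mathbb R^{p+1})$. A set $I_0\subset\{1,\dots,p+1\}$ with $1\in I_0$ and cardinality $>1$ is fixed, and $\widehat{\mathbf z}^0:=\sum_{i\in I_0}z^{i-1}\mathbf e_1\otimes\cdots\otimes\mathbf e_1\otimes\mathbf e_i$ ($l$ factors $\mathbf e_1$), with $\widehat{\mathbf z}^0_t$ the same expression for $z_t$. A state map $F$ has the echo state property (ESP) on inputs $K_M$ if for every $\mathbf z\in K_M$ there is a unique state sequence $(\mathbf x_t)_{t\in\mathbb Z_-}$ in the state space with $\mathbf x_t=F(\mathbf x_{t-1},z_t)$ for all $t$; the associated filter maps $\mathbf z$ to this sequence. The fading memory property (FMP) means continuity of the filter w.r.t. product topologies. $K_L$ denotes sequences with all terms of norm $\le L$. *)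

theory Defs
  imports "HOL-Analysis.Analysis"
begin

text \<open>Tensors in T^k(R^(p+1)) are represented as coefficient arrays
  nat list => real, indexed by lists of length k with entries in {1..p+1}
  (1-based, as in the paper), and vanishing outside this index set.\<close>

definition idx :: "nat \<Rightarrow> nat \<Rightarrow> nat list set" where
  "idx p k = {ix. length ix = k \<and> set ix \<subseteq> {1..p+1}}"

definition tens :: "nat \<Rightarrow> nat \<Rightarrow> (nat list \<Rightarrow> real) set" where
  "tens p k = {a. \<forall>ix. ix \<notin> idx p k \<longrightarrow> a ix = 0}"

definition tnorm :: "nat \<Rightarrow> nat \<Rightarrow> (nat list \<Rightarrow> real) \<Rightarrow> real" where
  "tnorm p k a = sqrt (\<Sum>ix\<in>idx p k. (a ix)\<^sup>2)"

definition pi_low :: "(nat list \<Rightarrow> real) \<Rightarrow> nat list \<Rightarrow> real" where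
  "pi_low a = (\<lambda>ix. a (1 # ix))"

definition tprod :: "(nat list \<Rightarrow> real) \<Rightarrow> (nat \<Rightarrow> real) \<Rightarrow> nat list \<Rightarrow> real" where
  "tprod a v = (\<lambda>ix. if ix = [] then 0 else a (butlast ix) * v (last ix))"

definition ztil :: "nat \<Rightarrow> real \<Rightarrow> nat \<Rightarrow> real" where
  "ztil p z = (\<lambda>i. if i \<in> {1..p+1} then z ^ (i - 1) else 0)"

definition zhat0 :: "nat \<Rightarrow> nat set \<Rightarrow> real \<Rightarrow> nat list \<Rightarrow> real" where
  "zhat0 l I0 z = (\<lambda>ix. if length ix = l + 1 \<and> (\<forall>r<l. ix ! r = 1) \<and> ix ! l \<in> I0
                         then z ^ (ix ! l - 1) else 0)"

definition zhat :: "nat \<Rightarrow> nat \<Rightarrow> (int \<Rightarrow> real) \<Rightarrow> int \<Rightarrow> nat list \<Rightarrow> real" where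
  "zhat p l z t = (\<lambda>ix. if ix \<in> idx p (l + 1)
                         then (\<Prod>r<l + 1. (z (t - int l + int r)) ^ (ix ! r - 1)) else 0)"

definition FSig :: "real \<Rightarrow> nat \<Rightarrow> nat \<Rightarrow> nat set \<Rightarrow> (nat list \<Rightarrow> real) \<Rightarrow> real \<Rightarrow> nat list \<Rightarrow> real" where
  "FSig lam p l I0 x z = (\<lambda>ix. lam * tprod (pi_low x) (ztil p z) ix + zhat0 l I0 z ix)"

definition Mtil :: "real \<Rightarrow> nat \<Rightarrow> real" where
  "Mtil M p = (\<Sum>j\<le>p. M ^ j)"

fun Psi :: "nat \<Rightarrow> nat \<Rightarrow> nat set \<Rightarrow> (int \<Rightarrow> real) \<Rightarrow> int \<Rightarrow> nat \<Rightarrow> nat \<Rightarrow> nat list \<Rightarrow> real" where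
  "Psi p l I0 z t j 0 = zhat0 l I0 (z (t - int j))"
| "Psi p l I0 z t j (Suc r) = tprod (pi_low (Psi p l I0 z t j r)) (ztil p (z (t - int j + int (Suc r))))"

definition Phi :: "nat \<Rightarrow> nat \<Rightarrow> nat set \<Rightarrow> nat \<Rightarrow> (int \<Rightarrow> real) \<Rightarrow> int \<Rightarrow> nat list \<Rightarrow> real" where
  "Phi p l I0 j z t = Psi p l I0 z t j j"

text \<open>Sequences indexed by Z_- are represented as functions on int that vanish for t > 0.\<close>
definition USig :: "real \<Rightarrow> nat \<Rightarrow> nat \<Rightarrow> nat set \<Rightarrow> (int \<Rightarrow> real) \<Rightarrow> int \<Rightarrow> nat list \<Rightarrow> real" where
  "USig lam p l I0 z t = (if 0 < t then (\<lambda>ix. 0) else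
     (\<lambda>ix. lam ^ (l + 1) / (1 - lam) * zhat p l z t ix + (\<Sum>j\<le>l. lam ^ j * Phi p l I0 j z t ix)))"

definition KM :: "real \<Rightarrow> (int \<Rightarrow> real) set" where
  "KM M = {z. \<forall>t. (t \<le> 0 \<longrightarrow> \<bar>z t\<bar> \<le> M) \<and> (0 < t \<longrightarrow> z t = 0)}"

definition KL :: "nat \<Rightarrow> nat \<Rightarrow> real \<Rightarrow> (int \<Rightarrow> nat list \<Rightarrow> real) set" where
  "KL p k L = {x. \<forall>t. (t \<le> 0 \<longrightarrow> x t \<in> tens p k \<and> tnorm p k (x t) \<le> L)
                     \<and> (0 < t \<longrightarrow> x t = (\<lambda>ix. 0))}"

definition is_solution :: "((nat list \<Rightarrow> real) \<Rightarrow> real \<Rightarrow> nat list \<Rightarrow> real) \<Rightarrow> nat \<Rightarrow> nat \<Rightarrow> real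
    \<Rightarrow> (int \<Rightarrow> real) \<Rightarrow> (int \<Rightarrow> nat list \<Rightarrow> real) \<Rightarrow> bool" where
  "is_solution F p k L z x \<longleftrightarrow> x \<in> KL p k L \<and> (\<forall>t\<le>0. x t = F (x (t - 1)) (z t))"

definition has_ESP :: "((nat list \<Rightarrow> real) \<Rightarrow> real \<Rightarrow> nat list \<Rightarrow> real) \<Rightarrow> nat \<Rightarrow> nat \<Rightarrow> real
    \<Rightarrow> (int \<Rightarrow> real) set \<Rightarrow> bool" where
  "has_ESP F p k L K \<longleftrightarrow> (\<forall>z\<in>K. \<exists>!x. is_solution F p k L z x)"

definition tshift :: "'a \<Rightarrow> nat \<Rightarrow> (int \<Rightarrow> 'a) \<Rightarrow> int \<Rightarrow> 'a" where
  "tshift d tau z = (\<lambda>t. if t \<le> 0 then z (t - int tau) else d)"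

end

theory Submission
  imports Defs
begin

text \<open>The state map is affine in the state, with linear part \<open>x \<mapsto> \<lambda> \<pi>\<^sub>l(x) \<otimes> ztil z\<close>.
  Since \<open>\<pi>\<^sub>l\<close> does not increase norms and \<open>\<parallel>ztil z\<parallel> \<le> Mtil\<close> for \<open>\<bar>z\<bar> \<le> M\<close>, it is a
  \<open>\<lambda> Mtil\<close>-contraction; this gives the invariant ball and, iterating the contraction into the
  past, uniqueness of bounded solutions. For existence one checks that the explicit series
  solves the recursion: all tensors involved are pure tensors \<open>v\<^sub>1 \<otimes> \<dots> \<otimes> v\<^sub>l\<^sub>+\<^sub>1\<close>, and one step
  of the recursion drops the first factor (weighted by its first coordinate, which is \<open>1\<close>) and
  appends \<open>ztil z\<^sub>t\<close>. So \<open>\<Phi>\<^sub>j\<close> moves to \<open>\<Phi>\<^sub>j\<^sub>+\<^sub>1\<close>, both \<open>\<Phi>\<^sub>l\<close> and \<open>zhat\<close> move to \<open>zhat\<close>, and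
  the coefficients match because \<open>\<lambda>\<^sup>l\<^sup>+\<^sup>1/(1-\<lambda>) = \<lambda> (\<lambda>\<^sup>l\<^sup>+\<^sup>1/(1-\<lambda>) + \<lambda>\<^sup>l)\<close>.\<close>

section \<open>Norms of tensors\<close>

definition vnorm :: "nat \<Rightarrow> (nat \<Rightarrow> real) \<Rightarrow> real" where
  "vnorm p v = L2_set v {1..p+1}"

lemma tnorm_eq_L2_set: "tnorm p k a = L2_set a (idx p k)"
  by (simp add: tnorm_def L2_set_def)

lemma tnorm_nonneg [simp]: "0 \<le> tnorm p k a"
  by (simp add: tnorm_eq_L2_set)

lemma vnorm_nonneg [simp]: "0 \<le> vnorm p v"
  by (simp add: vnorm_def)

lemma finite_idx [simp]: "finite (idx p k)"
proof -
  have "idx p k = {xs. set xs \<subseteq> {1..p+1} \<and> length xs = k}"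
    by (auto simp: idx_def)
  then show ?thesis
    using finite_lists_length_eq[of "{1..p+1}" k] by simp
qed

lemma idx_0: "idx p 0 = {[]}"
  by (auto simp: idx_def)

lemma bij_betw_snoc_idx: "bij_betw (\<lambda>(xs, i). xs @ [i]) (idx p k \<times> {1..p+1}) (idx p (Suc k))"
proof (rule bij_betwI')
  fix y assume y: "y \<in> idx p (Suc k)"
  then have "y \<noteq> []" and "set y \<subseteq> {1..p+1}" and "length y = Suc k"
    by (auto simp: idx_def)
  then have "butlast y \<in> idx p k" and "last y \<in> {1..p+1}"
    using in_set_butlastD last_in_set by (fastforce simp: idx_def)+
  then show "\<exists>x\<in>idx p k \<times> {1..p+1}. y = (case x of (xs, i) \<Rightarrow> xs @ [i])"
    using \<open>y \<noteq> []\<close> by (intro bexI[of _ "(butlast y, last y)"]) auto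
next
  fix x assume "x \<in> idx p k \<times> {1..p+1}"
  then show "(case x of (xs, i) \<Rightarrow> xs @ [i]) \<in> idx p (Suc k)"
    by (cases x) (simp add: idx_def)
qed (simp add: case_prod_unfold prod_eq_iff)

lemma tnorm_tprod: "tnorm p (Suc k) (tprod a v) = tnorm p k a * vnorm p v"
proof -
  have "(\<Sum>ix\<in>idx p (Suc k). (tprod a v ix)\<^sup>2) = (\<Sum>(xs, i)\<in>idx p k \<times> {1..p+1}. (tprod a v (xs @ [i]))\<^sup>2)"
    using sum.reindex_bij_betw[OF bij_betw_snoc_idx, of "\<lambda>ix. (tprod a v ix)\<^sup>2"]
    by (simp add: case_prod_unfold)
  also have "\<dots> = (\<Sum>(xs, i)\<in>idx p k \<times> {1..p+1}. (a xs)\<^sup>2 * (v i)\<^sup>2)"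
    by (simp add: tprod_def power_mult_distrib)
  also have "\<dots> = (\<Sum>xs\<in>idx p k. (a xs)\<^sup>2) * (\<Sum>i\<in>{1..p+1}. (v i)\<^sup>2)"
    by (simp only: sum_product sum.cartesian_product case_prod_unfold)
  finally show ?thesis
    unfolding tnorm_def vnorm_def L2_set_def by (simp only: real_sqrt_mult)
qed

lemma tnorm_pi_low_le: "tnorm p k (pi_low a) \<le> tnorm p (Suc k) a"
proof -
  have "(\<Sum>ix\<in>idx p k. (pi_low a ix)\<^sup>2) = (\<Sum>ix\<in>Cons 1 ` idx p k. (a ix)\<^sup>2)"
    by (simp add: sum.reindex pi_low_def)
  also have "\<dots> \<le> (\<Sum>ix\<in>idx p (Suc k). (a ix)\<^sup>2)"
    by (rule sum_mono2) (simp, auto simp: idx_def)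
  finally show ?thesis
    by (simp add: tnorm_def)
qed

lemma tnorm_add_le: "tnorm p k (\<lambda>ix. a ix + b ix) \<le> tnorm p k a + tnorm p k b"
  by (simp add: tnorm_eq_L2_set L2_set_triangle_ineq)

lemma tnorm_diff_le: "tnorm p k (\<lambda>ix. a ix - b ix) \<le> tnorm p k a + tnorm p k b"
  using tnorm_add_le[of p k a "\<lambda>ix. - b ix"] by (simp add: tnorm_def)

lemma tnorm_scale: "0 \<le> c \<Longrightarrow> tnorm p k (\<lambda>ix. c * a ix) = c * tnorm p k a"
  by (simp add: tnorm_eq_L2_set L2_set_right_distrib)

lemma tnorm_sum_le: "tnorm p k (\<lambda>ix. \<Sum>j\<in>J. f j ix) \<le> (\<Sum>j\<in>J. tnorm p k (f j))"
proof (induction J rule: infinite_finite_induct)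
  case (insert j J)
  have "tnorm p k (\<lambda>ix. f j ix + (\<Sum>j\<in>J. f j ix)) \<le> tnorm p k (f j) + tnorm p k (\<lambda>ix. \<Sum>j\<in>J. f j ix)"
    by (rule tnorm_add_le)
  then show ?case
    using insert by simp
qed (simp_all add: tnorm_def)

lemma tnorm_eq_0_imp_eq:
  assumes "a \<in> tens p k" "b \<in> tens p k" "tnorm p k (\<lambda>ix. a ix - b ix) = 0"
  shows "a = b"
proof
  fix ix
  show "a ix = b ix"
  proof (cases "ix \<in> idx p k")
    case True
    then show ?thesis
      using assms(3) by (simp add: tnorm_eq_L2_set L2_set_eq_0_iff)
  next
    case False
    then show ?thesis
      using assms(1,2) by (simp add: tens_def)
  qed
qed

lemma Mtil_eq_sum: "Mtil M p = (\<Sum>i\<in>{1..p+1}. M ^ (i - 1))"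
  using sum.shift_bounds_cl_nat_ivl[of "\<lambda>i. M ^ (i - 1)" 0 1 p]
  by (simp add: Mtil_def atMost_atLeast0)

lemma one_le_Mtil: "0 \<le> M \<Longrightarrow> 1 \<le> Mtil M p"
  using member_le_sum[of 0 "{..p}" "\<lambda>j. M ^ j"] by (simp add: Mtil_def)

lemma vnorm_le_Mtil:
  assumes "\<And>i. i \<in> {1..p+1} \<Longrightarrow> \<bar>v i\<bar> \<le> \<bar>z\<bar> ^ (i - 1)" and "\<bar>z\<bar> \<le> M"
  shows "vnorm p v \<le> Mtil M p"
proof -
  have "vnorm p v \<le> (\<Sum>i\<in>{1..p+1}. \<bar>v i\<bar>)"
    unfolding vnorm_def by (rule L2_set_le_sum_abs)
  also have "\<dots> \<le> (\<Sum>i\<in>{1..p+1}. M ^ (i - 1))"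
  proof (rule sum_mono)
    fix i assume "i \<in> {1..p+1}"
    then show "\<bar>v i\<bar> \<le> M ^ (i - 1)"
      using assms(1) power_mono[OF assms(2) abs_ge_zero, of "i - 1"] by fastforce
  qed
  finally show ?thesis
    by (simp add: Mtil_eq_sum)
qed

lemma vnorm_ztil_le: "\<bar>z\<bar> \<le> M \<Longrightarrow> vnorm p (ztil p z) \<le> Mtil M p"
  by (rule vnorm_le_Mtil[where z = z]) (simp_all add: ztil_def power_abs)

lemma tnorm_tprod_pi_low_ztil_le:
  "\<bar>z\<bar> \<le> M \<Longrightarrow> tnorm p (Suc k) (tprod (pi_low a) (ztil p z)) \<le> tnorm p (Suc k) a * Mtil M p"
  unfolding tnorm_tprod by (intro mult_mono tnorm_pi_low_le vnorm_ztil_le) simp_all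

lemma tprod_in_tens:
  assumes "a \<in> tens p k" "\<And>i. i \<notin> {1..p+1} \<Longrightarrow> v i = 0"
  shows "tprod a v \<in> tens p (Suc k)"
  unfolding tens_def
proof (intro CollectI allI impI)
  fix ix assume ix: "ix \<notin> idx p (Suc k)"
  show "tprod a v ix = 0"
  proof (cases ix rule: rev_exhaust)
    case (snoc xs i)
    then have "xs \<notin> idx p k \<or> i \<notin> {1..p+1}"
      using ix by (auto simp: idx_def)
    then show ?thesis
      using snoc assms by (auto simp: tprod_def tens_def)
  qed (simp add: tprod_def)
qed

lemma pi_low_in_tens: "a \<in> tens p (Suc k) \<Longrightarrow> pi_low a \<in> tens p k"
  by (auto simp: tens_def pi_low_def idx_def)

lemma tprod_pi_low_ztil_in_tens: "a \<in> tens p (Suc k) \<Longrightarrow> tprod (pi_low a) (ztil p z) \<in> tens p (Suc k)"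
  by (intro tprod_in_tens pi_low_in_tens) (auto simp: ztil_def)

lemma zhat0_in_tens:
  assumes "I0 \<subseteq> {1..p+1}"
  shows "zhat0 l I0 z \<in> tens p (Suc l)"
  unfolding tens_def
proof (intro CollectI allI impI)
  fix ix assume ix: "ix \<notin> idx p (Suc l)"
  show "zhat0 l I0 z ix = 0"
  proof (rule ccontr)
    assume "zhat0 l I0 z ix \<noteq> 0"
    then have h: "length ix = Suc l" "\<forall>r<l. ix ! r = 1" "ix ! l \<in> I0"
      by (auto simp: zhat0_def split: if_splits)
    then have "\<forall>r<length ix. ix ! r \<in> {1..p+1}"
      using assms less_Suc_eq by auto
    then have "set ix \<subseteq> {1..p+1}"
      by (auto simp: in_set_conv_nth)
    then show False
      using ix h by (simp add: idx_def)
  qed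
qed

lemma zhat_in_tens: "zhat p l z t \<in> tens p (Suc l)"
  by (simp add: tens_def zhat_def)

lemma Psi_in_tens: "I0 \<subseteq> {1..p+1} \<Longrightarrow> Psi p l I0 z t j r \<in> tens p (Suc l)"
  by (induction r) (simp_all add: zhat0_in_tens tprod_pi_low_ztil_in_tens)

section \<open>Pure tensors\<close>

definition pure_tensor :: "(nat \<Rightarrow> real) list \<Rightarrow> nat list \<Rightarrow> real" where
  "pure_tensor vs ix = (if length ix = length vs then (\<Prod>k<length vs. (vs ! k) (ix ! k)) else 0)"

definition basis1 :: "nat \<Rightarrow> real" where
  "basis1 i = (if i = 1 then 1 else 0)"

definition ztil_on :: "nat set \<Rightarrow> real \<Rightarrow> nat \<Rightarrow> real" where
  "ztil_on I0 z i = (if i \<in> I0 then z ^ (i - 1) else 0)"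

lemma basis1_1 [simp]: "basis1 1 = 1" "basis1 (Suc 0) = 1"
  by (simp_all add: basis1_def)

lemma ztil_1 [simp]: "ztil p z 1 = 1" "ztil p z (Suc 0) = 1"
  by (simp_all add: ztil_def)

lemma tprod_pure_tensor: "tprod (pure_tensor vs) v = pure_tensor (vs @ [v])"
proof
  fix ix
  show "tprod (pure_tensor vs) v ix = pure_tensor (vs @ [v]) ix"
  proof (cases ix rule: rev_exhaust)
    case (snoc xs i)
    have "length xs = length vs \<Longrightarrow>
        (\<Prod>k<length vs. ((vs @ [v]) ! k) ((xs @ [i]) ! k)) = (\<Prod>k<length vs. (vs ! k) (xs ! k))"
      by (rule prod.cong) (auto simp: nth_append)
    then show ?thesis
      using snoc by (simp add: tprod_def pure_tensor_def nth_append)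
  qed (simp add: tprod_def pure_tensor_def)
qed

lemma pi_low_pure_tensor: "pi_low (pure_tensor (v # vs)) = (\<lambda>ix. v 1 * pure_tensor vs ix)"
  by (rule ext)
    (simp add: pi_low_def pure_tensor_def prod.lessThan_Suc_shift del: prod.lessThan_Suc)

lemma tnorm_pure_tensor: "tnorm p (length vs) (pure_tensor vs) = (\<Prod>v\<leftarrow>vs. vnorm p v)"
proof (induction vs rule: rev_induct)
  case Nil
  show ?case
    by (simp add: pure_tensor_def idx_0 tnorm_def)
next
  case (snoc v vs)
  have "tnorm p (Suc (length vs)) (tprod (pure_tensor vs) v) = tnorm p (length vs) (pure_tensor vs) * vnorm p v"
    by (rule tnorm_tprod)
  then show ?case
    using snoc by (simp add: tprod_pure_tensor)
qed

lemma prod_list_le_power: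
  fixes B :: "'b::linordered_semidom"
  assumes "\<And>v. v \<in> set vs \<Longrightarrow> 0 \<le> f v \<and> f v \<le> B"
  shows "(\<Prod>v\<leftarrow>vs. f v) \<le> B ^ length vs"
  using assms
proof (induction vs)
  case (Cons v vs)
  then have "0 \<le> (\<Prod>v\<leftarrow>vs. f v)"
    by (intro prod_list_nonneg) auto
  moreover have "0 \<le> f v" "f v \<le> B" "0 \<le> B"
    using Cons.prems[of v] by auto
  ultimately show ?case
    using Cons by (auto intro!: mult_mono)
qed simp

lemma vnorm_basis1: "vnorm p basis1 = 1"
proof -
  have "(\<Sum>i\<in>{1..p+1}. (basis1 i)\<^sup>2) = (\<Sum>i\<in>{1..p+1}. if i = 1 then 1 else 0)"
    by (rule sum.cong) (auto simp: basis1_def)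
  then show ?thesis
    by (simp add: vnorm_def L2_set_def)
qed

lemma prod_indicator: "(\<Prod>k<(n::nat). if P k then 1 else 0 :: real) = (if \<forall>k<n. P k then 1 else 0)"
  by (induction n) (auto simp: less_Suc_eq)

lemma zhat0_eq_pure_tensor: "zhat0 l I0 z = pure_tensor (replicate l basis1 @ [ztil_on I0 z])"
proof
  fix ix
  show "zhat0 l I0 z ix = pure_tensor (replicate l basis1 @ [ztil_on I0 z]) ix"
  proof (cases "length ix = Suc l")
    case True
    have "(\<Prod>k<l. ((replicate l basis1 @ [ztil_on I0 z]) ! k) (ix ! k)) = (\<Prod>k<l. if ix ! k = 1 then 1 else 0)"
      by (rule prod.cong) (auto simp: nth_append basis1_def)
    then show ?thesis
      using True by (auto simp: pure_tensor_def prod_indicator nth_append zhat0_def ztil_on_def)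
  qed (simp add: pure_tensor_def zhat0_def)
qed

lemma zhat_eq_pure_tensor:
  "zhat p l z t = pure_tensor (map (\<lambda>r. ztil p (z (t - int l + int r))) [0..<Suc l])"
proof
  fix ix
  let ?vs = "map (\<lambda>r. ztil p (z (t - int l + int r))) [0..<Suc l]"
  show "zhat p l z t ix = pure_tensor ?vs ix"
  proof (cases "length ix = Suc l")
    case True
    then have pure: "pure_tensor ?vs ix = (\<Prod>r<Suc l. ztil p (z (t - int l + int r)) (ix ! r))"
      unfolding pure_tensor_def by (simp del: upt_Suc prod.lessThan_Suc)
    show ?thesis
    proof (cases "ix \<in> idx p (Suc l)")
      case in_idx: True
      then have "set ix \<subseteq> {1..p+1}"
        by (simp add: idx_def)
      then have "\<forall>r<Suc l. ix ! r \<in> {1..p+1}"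
        using True by (metis nth_mem subsetD)
      then have "(\<Prod>r<Suc l. ztil p (z (t - int l + int r)) (ix ! r))
          = (\<Prod>r<Suc l. z (t - int l + int r) ^ (ix ! r - 1))"
        by (intro prod.cong) (auto simp: ztil_def)
      then show ?thesis
        using in_idx pure by (simp add: zhat_def)
    next
      case False
      then have "\<not> set ix \<subseteq> {1..p+1}"
        using True unfolding idx_def by blast
      then obtain r where r: "r < Suc l" "ix ! r \<notin> {1..p+1}"
        using True by (metis in_set_conv_nth subsetI)
      then have "(\<Prod>r<Suc l. ztil p (z (t - int l + int r)) (ix ! r)) = 0"
        by (intro prod_zero) (auto simp: ztil_def intro!: bexI[of _ r])
      then show ?thesis
        using False pure by (simp add: zhat_def)
    qed
  qed (simp add: pure_tensor_def zhat_def idx_def)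
qed

lemma Psi_eq_pure_tensor:
  "r \<le> l \<Longrightarrow> Psi p l I0 z s j r = pure_tensor (replicate (l - r) basis1
     @ ztil_on I0 (z (s - int j)) # map (\<lambda>k. ztil p (z (s - int j + int (Suc k)))) [0..<r])"
proof (induction r)
  case 0
  then show ?case
    by (simp add: zhat0_eq_pure_tensor)
next
  case (Suc r)
  then have "l - r = Suc (l - Suc r)"
    by simp
  with Suc show ?case
    by (simp add: pi_low_pure_tensor tprod_pure_tensor)
qed

lemma tnorm_zhat0_le:
  assumes "\<bar>z\<bar> \<le> M"
  shows "tnorm p (Suc l) (zhat0 l I0 z) \<le> Mtil M p"
proof -
  have "tnorm p (Suc l) (zhat0 l I0 z) = vnorm p (ztil_on I0 z)"
    using tnorm_pure_tensor[of p "replicate l basis1 @ [ztil_on I0 z]"]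
    by (simp add: zhat0_eq_pure_tensor vnorm_basis1)
  also have "\<dots> \<le> Mtil M p"
    using assms by (intro vnorm_le_Mtil[where z = z]) (auto simp: ztil_on_def power_abs)
  finally show ?thesis .
qed

lemma tprod_pi_low_zhat: "tprod (pi_low (zhat p l z (t - 1))) (ztil p (z t)) = zhat p l z t"
proof -
  have "map (\<lambda>r. ztil p (z (t - 1 - int l + int r))) [0..<Suc l]
      = ztil p (z (t - 1 - int l)) # map (\<lambda>r. ztil p (z (t - int l + int r))) [0..<l]"
    by (simp only: map_upt_Suc) (simp add: algebra_simps)
  then have "pi_low (zhat p l z (t - 1)) = pure_tensor (map (\<lambda>r. ztil p (z (t - int l + int r))) [0..<l])"
    by (simp only: zhat_eq_pure_tensor pi_low_pure_tensor ztil_1 mult_1)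
  then have "tprod (pi_low (zhat p l z (t - 1))) (ztil p (z t))
      = pure_tensor (map (\<lambda>r. ztil p (z (t - int l + int r))) [0..<l] @ [ztil p (z t)])"
    by (simp add: tprod_pure_tensor del: upt_Suc)
  then show ?thesis
    by (simp add: zhat_eq_pure_tensor)
qed

lemma Psi_shift: "Psi p l I0 z s j r = Psi p l I0 z (s + 1) (Suc j) r"
  by (induction r) (simp_all add: algebra_simps)

lemma tprod_pi_low_Phi: "tprod (pi_low (Phi p l I0 j z (t - 1))) (ztil p (z t)) = Phi p l I0 (Suc j) z t"
proof -
  have "tprod (pi_low (Phi p l I0 j z (t - 1))) (ztil p (z t)) = Psi p l I0 z (t - 1) j (Suc j)"
    by (simp add: Phi_def)
  also have "\<dots> = Psi p l I0 z (t - 1 + 1) (Suc j) (Suc j)"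
    by (rule Psi_shift)
  finally show ?thesis
    by (simp add: Phi_def)
qed

text \<open>The leading factor \<open>ztil_on I0 z\<close> of \<open>\<Phi>\<^sub>l\<^sub>+\<^sub>1\<close> is dropped with weight \<open>z\<^sup>0 = 1\<close>,
  which is where \<open>1 \<in> I0\<close> is needed.\<close>

lemma Phi_Suc_self:
  assumes "1 \<in> I0"
  shows "Phi p l I0 (Suc l) z t = zhat p l z t"
proof -
  let ?vs = "\<lambda>n. map (\<lambda>k. ztil p (z (t - int (Suc l) + int (Suc k)))) [0..<n]"
  have "pi_low (Psi p l I0 z t (Suc l) l) = pure_tensor (?vs l)"
    using assms by (simp add: Psi_eq_pure_tensor pi_low_pure_tensor ztil_on_def)
  then have "Phi p l I0 (Suc l) z t = pure_tensor (?vs (Suc l))"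
    by (simp add: Phi_def tprod_pure_tensor)
  also have "?vs (Suc l) = map (\<lambda>r. ztil p (z (t - int l + int r))) [0..<Suc l]"
    by (rule map_cong) (simp_all add: algebra_simps)
  finally show ?thesis
    by (simp add: zhat_eq_pure_tensor)
qed

lemma FSig_diff:
  "(\<lambda>ix. FSig lam p l I0 x1 z ix - FSig lam p l I0 x2 z ix)
     = (\<lambda>ix. lam * tprod (pi_low (\<lambda>ix. x1 ix - x2 ix)) (ztil p z) ix)"
  by (rule ext) (simp add: FSig_def tprod_def pi_low_def algebra_simps)

lemma FSig_lipschitz:
  assumes "0 \<le> lam" "\<bar>z\<bar> \<le> M"
  shows "tnorm p (l+1) (\<lambda>ix. FSig lam p l I0 x1 z ix - FSig lam p l I0 x2 z ix)
           \<le> lam * Mtil M p * tnorm p (l+1) (\<lambda>ix. x1 ix - x2 ix)"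
  using mult_left_mono[OF tnorm_tprod_pi_low_ztil_le[OF assms(2), of p l "\<lambda>ix. x1 ix - x2 ix"] assms(1)]
  by (simp add: FSig_diff tnorm_scale assms(1) algebra_simps)

lemma FSig_maps_ball:
  assumes "0 \<le> lam" "\<bar>z\<bar> \<le> M" "I0 \<subseteq> {1..p+1}"
    and "x \<in> tens p (l+1)" "tnorm p (l+1) x \<le> L"
    and L: "lam * L * Mtil M p + Mtil M p \<le> L"
  shows "FSig lam p l I0 x z \<in> tens p (l+1) \<and> tnorm p (l+1) (FSig lam p l I0 x z) \<le> L"
proof
  have F: "FSig lam p l I0 x z = (\<lambda>ix. lam * tprod (pi_low x) (ztil p z) ix + zhat0 l I0 z ix)"
    by (simp add: FSig_def)
  have Mtil: "1 \<le> Mtil M p"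
    using assms(2) by (intro one_le_Mtil) linarith
  show "FSig lam p l I0 x z \<in> tens p (l+1)"
    using assms(3,4) tprod_pi_low_ztil_in_tens zhat0_in_tens by (fastforce simp: F tens_def)
  have "tnorm p (Suc l) (FSig lam p l I0 x z)
      \<le> lam * tnorm p (Suc l) (tprod (pi_low x) (ztil p z)) + tnorm p (Suc l) (zhat0 l I0 z)"
    using tnorm_add_le[of p "Suc l" "\<lambda>ix. lam * tprod (pi_low x) (ztil p z) ix"]
    by (simp add: F tnorm_scale assms(1))
  also have "\<dots> \<le> lam * (L * Mtil M p) + Mtil M p"
  proof (rule add_mono)
    have "tnorm p (Suc l) x * Mtil M p \<le> L * Mtil M p"
      using assms(5) Mtil by (intro mult_right_mono) auto
    then show "lam * tnorm p (Suc l) (tprod (pi_low x) (ztil p z)) \<le> lam * (L * Mtil M p)"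
      using tnorm_tprod_pi_low_ztil_le[OF assms(2), of p l x] assms(1)
      by (intro mult_left_mono) auto
    show "tnorm p (Suc l) (zhat0 l I0 z) \<le> Mtil M p"
      using assms(2) by (rule tnorm_zhat0_le)
  qed
  finally show "tnorm p (l+1) (FSig lam p l I0 x z) \<le> L"
    using L by (simp add: algebra_simps)
qed

section \<open>The explicit filter\<close>

lemma KM_abs_le: "z \<in> KM M \<Longrightarrow> \<bar>z s\<bar> \<le> M"
  unfolding KM_def by (cases "s \<le> 0") force+

lemma tnorm_Psi_le:
  assumes "\<And>s. \<bar>z s\<bar> \<le> M"
  shows "tnorm p (Suc l) (Psi p l I0 z t j r) \<le> Mtil M p ^ Suc r"
proof (induction r)
  case 0
  show ?case
    using tnorm_zhat0_le[OF assms] by simp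
next
  case (Suc r)
  have "0 \<le> Mtil M p"
    using one_le_Mtil[of M p] assms[of 0] by linarith
  have "tnorm p (Suc l) (Psi p l I0 z t j (Suc r)) \<le> tnorm p (Suc l) (Psi p l I0 z t j r) * Mtil M p"
    by (simp only: Psi.simps) (rule tnorm_tprod_pi_low_ztil_le[OF assms])
  also have "\<dots> \<le> Mtil M p ^ Suc r * Mtil M p"
    using Suc.IH \<open>0 \<le> Mtil M p\<close> by (rule mult_right_mono)
  finally show ?case
    by (simp only: power_Suc2)
qed

lemma tnorm_zhat_le:
  assumes "\<And>s. \<bar>z s\<bar> \<le> M"
  shows "tnorm p (Suc l) (zhat p l z t) \<le> Mtil M p ^ Suc l"
proof -
  let ?vs = "map (\<lambda>r. ztil p (z (t - int l + int r))) [0..<Suc l]"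
  have "tnorm p (Suc l) (zhat p l z t) = (\<Prod>v\<leftarrow>?vs. vnorm p v)"
    using tnorm_pure_tensor[of p ?vs] by (simp add: zhat_eq_pure_tensor del: upt_Suc)
  also have "\<dots> \<le> Mtil M p ^ length ?vs"
    by (rule prod_list_le_power) (auto intro: vnorm_ztil_le assms)
  finally show ?thesis
    by simp
qed

lemma USig_nonpos:
  "t \<le> 0 \<Longrightarrow> USig lam p l I0 z t =
     (\<lambda>ix. lam ^ (l + 1) / (1 - lam) * zhat p l z t ix + (\<Sum>j\<le>l. lam ^ j * Phi p l I0 j z t ix))"
  by (simp add: USig_def)

lemma tprod_pi_low_linear:
  "tprod (pi_low (\<lambda>ix. c * a ix + (\<Sum>j\<in>J. g j * b j ix))) v ix
     = c * tprod (pi_low a) v ix + (\<Sum>j\<in>J. g j * tprod (pi_low (b j)) v ix)"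
  by (simp add: tprod_def pi_low_def sum_distrib_right ring_distribs mult.assoc)

lemma USig_step:
  assumes "1 \<in> I0" "lam < 1" "t \<le> 0"
  shows "USig lam p l I0 z t = FSig lam p l I0 (USig lam p l I0 z (t - 1)) (z t)"
proof
  fix ix
  define A where "A = lam ^ (l + 1) / (1 - lam)"
  let ?step = "\<lambda>a. tprod (pi_low a) (ztil p (z t)) ix"
  have step_Phi: "(\<Sum>j\<le>l. lam ^ j * ?step (Phi p l I0 j z (t - 1)))
      = (\<Sum>j<l. lam ^ j * Phi p l I0 (Suc j) z t ix) + lam ^ l * zhat p l z t ix"
    by (simp add: tprod_pi_low_Phi lessThan_Suc_atMost[symmetric] Phi_Suc_self[OF assms(1)])
  have step_USig: "?step (USig lam p l I0 z (t - 1))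
      = A * zhat p l z t ix + (\<Sum>j\<le>l. lam ^ j * ?step (Phi p l I0 j z (t - 1)))"
    using assms(3) by (simp only: USig_nonpos A_def tprod_pi_low_linear tprod_pi_low_zhat)
  have sum_Phi: "(\<Sum>j\<le>l. lam ^ j * Phi p l I0 j z t ix)
      = zhat0 l I0 (z t) ix + lam * (\<Sum>j<l. lam ^ j * Phi p l I0 (Suc j) z t ix)"
    by (simp add: lessThan_Suc_atMost[symmetric] sum.lessThan_Suc_shift Phi_def sum_distrib_left
        mult.assoc del: sum.lessThan_Suc)
  have A_rec: "A = lam * A + lam * lam ^ l"
    using assms(2) by (simp add: A_def field_simps)
  let ?S = "\<Sum>j<l. lam ^ j * Phi p l I0 (Suc j) z t ix"
  have "USig lam p l I0 z t ix = A * zhat p l z t ix + zhat0 l I0 (z t) ix + lam * ?S"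
    unfolding USig_nonpos[OF assms(3)] A_def[symmetric] sum_Phi by (simp add: algebra_simps)
  also have "\<dots> = lam * (A * zhat p l z t ix + (?S + lam ^ l * zhat p l z t ix)) + zhat0 l I0 (z t) ix"
    by (subst A_rec) (simp add: algebra_simps)
  also have "\<dots> = FSig lam p l I0 (USig lam p l I0 z (t - 1)) (z t) ix"
    by (simp add: FSig_def step_USig step_Phi)
  finally show "USig lam p l I0 z t ix = FSig lam p l I0 (USig lam p l I0 z (t - 1)) (z t) ix" .
qed

text \<open>Since \<open>Mtil \<ge> 1\<close>, the first term \<open>(\<lambda> Mtil)\<^sup>l\<^sup>+\<^sup>1/(1-\<lambda>)\<close> is dominated by the tail
  \<open>Mtil q\<^sup>l\<^sup>+\<^sup>1/(1-q)\<close> of the geometric series \<open>Mtil \<Sum> q\<^sup>j = Mtil/(1-q)\<close>, \<open>q = \<lambda> Mtil\<close>.\<close>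

lemma filter_coefficients_le:
  fixes lam Mt :: real
  assumes "0 < lam" "lam < 1" "1 \<le> Mt" "lam * Mt < 1"
  shows "lam ^ (l+1) / (1 - lam) * Mt ^ Suc l + (\<Sum>j\<le>l. lam ^ j * Mt ^ Suc j) \<le> Mt / (1 - lam * Mt)"
proof -
  define q where "q = lam * Mt"
  have q: "0 < q" "q < 1"
    using assms by (auto simp: q_def)
  have "(\<Sum>j\<le>l. q ^ j) = (1 - q ^ Suc l) / (1 - q)"
    using sum_gp_basic[of q l] q by (simp add: field_simps)
  moreover have "(\<Sum>j\<le>l. lam ^ j * Mt ^ Suc j) = Mt * (\<Sum>j\<le>l. q ^ j)"
    by (simp add: q_def sum_distrib_left power_mult_distrib mult_ac)
  ultimately have sum: "(\<Sum>j\<le>l. lam ^ j * Mt ^ Suc j) = Mt * (1 - q ^ Suc l) / (1 - q)"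
    by simp
  have "1 - q \<le> Mt * (1 - lam)"
    using assms by (simp add: q_def algebra_simps)
  then have "q ^ Suc l * (1 - q) \<le> Mt * q ^ Suc l * (1 - lam)"
    using q by (simp add: mult_left_mono mult.assoc mult.left_commute)
  then have "lam ^ (l+1) / (1 - lam) * Mt ^ Suc l \<le> Mt * q ^ Suc l / (1 - q)"
    using q assms by (simp add: q_def power_mult_distrib field_simps)
  also have "\<dots> = Mt / (1 - q) - Mt * (1 - q ^ Suc l) / (1 - q)"
    by (simp only: diff_divide_distrib[symmetric]) (simp add: algebra_simps)
  finally show ?thesis
    unfolding q_def[symmetric] using sum by linarith
qed

lemma USig_in_ball:
  assumes "0 < lam" "lam < 1" "lam * Mtil M p < 1" "I0 \<subseteq> {1..p+1}"
    and z: "\<And>s. \<bar>z s\<bar> \<le> M" and "t \<le> 0"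
  shows "USig lam p l I0 z t \<in> tens p (l+1)
    \<and> tnorm p (l+1) (USig lam p l I0 z t) \<le> Mtil M p / (1 - lam * Mtil M p)"
proof
  define A where "A = lam ^ (l + 1) / (1 - lam)"
  have A: "0 \<le> A"
    using assms(1,2) by (simp add: A_def)
  have U: "USig lam p l I0 z t = (\<lambda>ix. A * zhat p l z t ix + (\<Sum>j\<le>l. lam ^ j * Phi p l I0 j z t ix))"
    using assms(6) by (simp add: USig_nonpos A_def)
  show "USig lam p l I0 z t \<in> tens p (l+1)"
    using zhat_in_tens Psi_in_tens[OF assms(4)] by (simp add: U Phi_def tens_def)
  have Phi: "tnorm p (Suc l) (\<lambda>ix. lam ^ j * Phi p l I0 j z t ix) \<le> lam ^ j * Mtil M p ^ Suc j" for j
    using tnorm_Psi_le[OF z] assms(1) by (simp add: Phi_def tnorm_scale mult_left_mono)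
  have "tnorm p (Suc l) (USig lam p l I0 z t)
      \<le> tnorm p (Suc l) (\<lambda>ix. A * zhat p l z t ix) + tnorm p (Suc l) (\<lambda>ix. \<Sum>j\<le>l. lam ^ j * Phi p l I0 j z t ix)"
    unfolding U by (rule tnorm_add_le)
  also have "\<dots> \<le> A * Mtil M p ^ Suc l + (\<Sum>j\<le>l. lam ^ j * Mtil M p ^ Suc j)"
    using mult_left_mono[OF tnorm_zhat_le[OF z] A] order_trans[OF tnorm_sum_le sum_mono[OF Phi]]
    by (intro add_mono) (simp_all add: tnorm_scale[OF A])
  also have "\<dots> \<le> Mtil M p / (1 - lam * Mtil M p)"
    unfolding A_def
    using filter_coefficients_le[OF assms(1,2) one_le_Mtil[OF order_trans[OF abs_ge_zero z[of 0]]] assms(3)]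
    by simp
  finally show "tnorm p (l+1) (USig lam p l I0 z t) \<le> Mtil M p / (1 - lam * Mtil M p)"
    by simp
qed

lemma USig_is_solution:
  assumes "0 < lam" "lam < 1" "lam * Mtil M p < 1" "I0 \<subseteq> {1..p+1}" "1 \<in> I0"
    and "z \<in> KM M"
  shows "is_solution (FSig lam p l I0) p (l+1) (Mtil M p / (1 - lam * Mtil M p)) z (USig lam p l I0 z)"
proof -
  have "\<bar>z s\<bar> \<le> M" for s
    using assms(6) by (rule KM_abs_le)
  moreover have "USig lam p l I0 z t = (\<lambda>ix. 0)" if "0 < t" for t
    using that by (simp add: USig_def)
  ultimately have "USig lam p l I0 z \<in> KL p (l+1) (Mtil M p / (1 - lam * Mtil M p))"
    unfolding KL_def using USig_in_ball[OF assms(1-4), where z = z and l = l] by blast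
  then show ?thesis
    unfolding is_solution_def using USig_step[OF assms(5,2)] by blast
qed

lemma continuous_on_if_const:
  "continuous_on S f \<Longrightarrow> continuous_on S g \<Longrightarrow> continuous_on S (\<lambda>x. if P then f x else g x)"
  by (cases P) simp_all

lemma continuous_on_zhat: "continuous_on UNIV (\<lambda>z. zhat p l z t ix)"
  unfolding zhat_def by (cases "ix \<in> idx p (l+1)") (simp_all add: continuous_intros)

lemma continuous_on_Psi: "continuous_on UNIV (\<lambda>z. Psi p l I0 z t j r ix)"
proof (induction r arbitrary: ix)
  case 0
  show ?case
    unfolding Psi.simps zhat0_def by (intro continuous_on_if_const continuous_intros) simp
next
  case (Suc r)
  show ?case
    unfolding Psi.simps tprod_def pi_low_def ztil_def
    by (intro continuous_on_if_const continuous_intros Suc) simp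
qed

lemma continuous_on_USig: "continuous_on S (USig lam p l I0)"
proof -
  have "continuous_on UNIV (USig lam p l I0)"
  proof (intro continuous_on_coordinatewise_then_product)
    fix t ix
    show "continuous_on UNIV (\<lambda>z. USig lam p l I0 z t ix)"
    proof (cases "t \<le> 0")
      case True
      show ?thesis
        unfolding USig_nonpos[OF True] Phi_def
        by (intro continuous_intros continuous_on_zhat continuous_on_Psi)
    qed (simp add: USig_def)
  qed
  then show ?thesis
    using continuous_on_subset by blast
qed

lemma zhat_shift: "(\<And>s. s \<le> t \<Longrightarrow> z' s = z (s - d)) \<Longrightarrow> zhat p l z' t = zhat p l z (t - d)"
  unfolding zhat_def by (intro ext if_cong refl prod.cong) (simp_all add: algebra_simps)

lemma Psi_time_shift:
  "(\<And>s. s \<le> t \<Longrightarrow> z' s = z (s - d)) \<Longrightarrow> r \<le> j \<Longrightarrow> Psi p l I0 z' t j r = Psi p l I0 z (t - d) j r"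
  by (induction r) (simp_all add: algebra_simps)

lemma USig_tshift: "USig lam p l I0 (tshift 0 tau z) = tshift (\<lambda>ix. 0) tau (USig lam p l I0 z)"
proof
  fix t :: int
  show "USig lam p l I0 (tshift 0 tau z) t = tshift (\<lambda>ix. 0) tau (USig lam p l I0 z) t"
  proof (cases "t \<le> 0")
    case True
    then have delay: "\<And>s. s \<le> t \<Longrightarrow> tshift 0 tau z s = z (s - int tau)"
      by (simp add: tshift_def)
    show ?thesis
      using True zhat_shift[of t "tshift 0 tau z" z "int tau", OF delay]
        Psi_time_shift[of t "tshift 0 tau z" z "int tau", OF delay]
      by (simp add: USig_nonpos tshift_def Phi_def)
  qed (simp add: USig_def tshift_def)
qed

section \<open>Uniqueness of bounded solutions\<close>

lemma is_solutionD:
  assumes "is_solution F p k L z x" "t \<le> 0"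
  shows "x t \<in> tens p k" "tnorm p k (x t) \<le> L" "x t = F (x (t - 1)) (z t)"
  using assms unfolding is_solution_def KL_def by blast+

lemma is_solution_pos: "is_solution F p k L z x \<Longrightarrow> 0 < t \<Longrightarrow> x t = (\<lambda>ix. 0)"
  unfolding is_solution_def KL_def by blast

lemma is_solution_in_KL: "is_solution F p k L z x \<Longrightarrow> x \<in> KL p k L"
  unfolding is_solution_def by blast

lemma solutions_dist_le:
  assumes c: "0 \<le> c"
    and contr: "\<And>x1 x2 w. x1 \<in> tens p k \<Longrightarrow> x2 \<in> tens p k \<Longrightarrow> \<bar>w\<bar> \<le> M \<Longrightarrow>
        tnorm p k (\<lambda>ix. F x1 w ix - F x2 w ix) \<le> c * tnorm p k (\<lambda>ix. x1 ix - x2 ix)"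
    and z: "\<And>s. \<bar>z s\<bar> \<le> M"
    and x: "is_solution F p k L z x" and y: "is_solution F p k L z y"
  shows "t \<le> 0 \<Longrightarrow> tnorm p k (\<lambda>ix. x t ix - y t ix) \<le> c ^ n * (2 * L)"
proof (induction n arbitrary: t)
  case 0
  then have "t \<le> 0" .
  then show ?case
    using tnorm_diff_le[of p k "x t" "y t"] is_solutionD(2)[OF x] is_solutionD(2)[OF y] by fastforce
next
  case (Suc n)
  have "t - 1 \<le> 0"
    using Suc.prems by simp
  have "tnorm p k (\<lambda>ix. x t ix - y t ix) \<le> c * tnorm p k (\<lambda>ix. x (t - 1) ix - y (t - 1) ix)"
    unfolding is_solutionD(3)[OF x Suc.prems] is_solutionD(3)[OF y Suc.prems]
    using is_solutionD(1)[OF x \<open>t - 1 \<le> 0\<close>] is_solutionD(1)[OF y \<open>t - 1 \<le> 0\<close>] z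
    by (rule contr)
  also have "\<dots> \<le> c * (c ^ n * (2 * L))"
    using Suc.IH[OF \<open>t - 1 \<le> 0\<close>] c by (rule mult_left_mono)
  finally show ?case
    by (simp add: mult.assoc)
qed

lemma solution_unique:
  assumes c: "0 \<le> c" "c < 1"
    and contr: "\<And>x1 x2 w. x1 \<in> tens p k \<Longrightarrow> x2 \<in> tens p k \<Longrightarrow> \<bar>w\<bar> \<le> M \<Longrightarrow>
        tnorm p k (\<lambda>ix. F x1 w ix - F x2 w ix) \<le> c * tnorm p k (\<lambda>ix. x1 ix - x2 ix)"
    and z: "\<And>s. \<bar>z s\<bar> \<le> M"
    and x: "is_solution F p k L z x" and y: "is_solution F p k L z y"
  shows "x = y"
proof
  fix t
  show "x t = y t"
  proof (cases "t \<le> 0")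
    case True
    have "(\<lambda>n. c ^ n * (2 * L)) \<longlonglongrightarrow> 0"
      using c by (intro tendsto_mult_left_zero LIMSEQ_power_zero) simp
    then have "tnorm p k (\<lambda>ix. x t ix - y t ix) \<le> 0"
      using solutions_dist_le[OF c(1) contr z x y True] by (intro LIMSEQ_le_const) auto
    then show ?thesis
      using tnorm_eq_0_imp_eq[OF is_solutionD(1)[OF x True] is_solutionD(1)[OF y True]]
      by (simp add: order_antisym)
  next
    case False
    then show ?thesis
      using is_solution_pos[OF x] is_solution_pos[OF y] by simp
  qed
qed

lemma has_ESP_of_contraction:
  assumes "0 \<le> c" "c < 1"
    and "\<And>x1 x2 w. x1 \<in> tens p k \<Longrightarrow> x2 \<in> tens p k \<Longrightarrow> \<bar>w\<bar> \<le> M \<Longrightarrow>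
        tnorm p k (\<lambda>ix. F x1 w ix - F x2 w ix) \<le> c * tnorm p k (\<lambda>ix. x1 ix - x2 ix)"
    and "\<And>z. z \<in> KM M \<Longrightarrow> is_solution F p k L z (U z)"
  shows "has_ESP F p k L (KM M)"
  unfolding has_ESP_def
proof
  fix z assume z: "z \<in> KM M"
  show "\<exists>!x. is_solution F p k L z x"
  proof (rule ex1I)
    show "is_solution F p k L z (U z)"
      using z by (rule assms(4))
    show "x = U z" if "is_solution F p k L z x" for x
      by (rule solution_unique[where c = c and M = M])
        (use assms(1-3) KM_abs_le[OF z] that assms(4)[OF z] in auto)
  qed
qed

theorem mainTheorem2:
  fixes M lam :: real and l p :: nat and I0 :: "nat set"
  assumes "0 < M" and "0 < lam" and "lam < min 1 (1 / Mtil M p)"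
    and "I0 \<subseteq> {1..p+1}" and "1 \<in> I0" and "card I0 > 1"
  shows "(\<forall>x1\<in>tens p (l+1). \<forall>x2\<in>tens p (l+1). \<forall>z. \<bar>z\<bar> \<le> M \<longrightarrow>
            tnorm p (l+1) (\<lambda>ix. FSig lam p l I0 x1 z ix - FSig lam p l I0 x2 z ix)
              \<le> lam * Mtil M p * tnorm p (l+1) (\<lambda>ix. x1 ix - x2 ix))
       \<and> lam * Mtil M p < 1
       \<and> (\<forall>x\<in>tens p (l+1). \<forall>z. tnorm p (l+1) x \<le> Mtil M p / (1 - lam * Mtil M p) \<and> \<bar>z\<bar> \<le> M \<longrightarrow>
            FSig lam p l I0 x z \<in> tens p (l+1)
            \<and> tnorm p (l+1) (FSig lam p l I0 x z) \<le> Mtil M p / (1 - lam * Mtil M p))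
       \<and> has_ESP (FSig lam p l I0) p (l+1) (Mtil M p / (1 - lam * Mtil M p)) (KM M)
       \<and> (\<forall>z\<in>KM M. is_solution (FSig lam p l I0) p (l+1) (Mtil M p / (1 - lam * Mtil M p)) z
                       (USig lam p l I0 z))
       \<and> USig lam p l I0 ` KM M \<subseteq> KL p (l+1) (Mtil M p / (1 - lam * Mtil M p))
       \<and> continuous_on (KM M) (USig lam p l I0)
       \<and> (\<forall>z\<in>KM M. \<forall>tau. USig lam p l I0 (tshift 0 tau z) = tshift (\<lambda>ix. 0) tau (USig lam p l I0 z))"
proof -
  define L where "L = Mtil M p / (1 - lam * Mtil M p)"
  have "1 \<le> Mtil M p"
    using assms(1) by (simp add: one_le_Mtil)
  moreover have "lam < 1" "lam < 1 / Mtil M p"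
    using assms(3) by auto
  ultimately have contraction: "lam * Mtil M p < 1"
    by (simp add: less_divide_eq)
  then have L: "lam * L * Mtil M p + Mtil M p \<le> L"
    by (simp add: L_def field_simps)
  have maps_ball: "\<forall>x\<in>tens p (l+1). \<forall>z. tnorm p (l+1) x \<le> L \<and> \<bar>z\<bar> \<le> M \<longrightarrow>
      FSig lam p l I0 x z \<in> tens p (l+1) \<and> tnorm p (l+1) (FSig lam p l I0 x z) \<le> L"
    by (intro ballI allI impI FSig_maps_ball) (use assms(2,4) L in auto)
  have lipschitz: "\<forall>x1\<in>tens p (l+1). \<forall>x2\<in>tens p (l+1). \<forall>z. \<bar>z\<bar> \<le> M \<longrightarrow>
      tnorm p (l+1) (\<lambda>ix. FSig lam p l I0 x1 z ix - FSig lam p l I0 x2 z ix)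
        \<le> lam * Mtil M p * tnorm p (l+1) (\<lambda>ix. x1 ix - x2 ix)"
    by (intro ballI allI impI FSig_lipschitz) (use assms(2) in simp_all)
  have solution: "\<forall>z\<in>KM M. is_solution (FSig lam p l I0) p (l+1) L z (USig lam p l I0 z)"
    unfolding L_def using assms(2) \<open>lam < 1\<close> contraction assms(4,5)
    by (intro ballI USig_is_solution)
  have ESP: "has_ESP (FSig lam p l I0) p (l+1) L (KM M)"
    by (rule has_ESP_of_contraction[where c = "lam * Mtil M p" and U = "USig lam p l I0"])
      (use assms(2) \<open>1 \<le> Mtil M p\<close> contraction lipschitz solution in auto)
  have image: "USig lam p l I0 ` KM M \<subseteq> KL p (l+1) L"
    using solution is_solution_in_KL by blast
  have time_invariant: "\<forall>z\<in>KM M. \<forall>tau. USig lam p l I0 (tshift 0 tau z) = tshift (\<lambda>ix. 0) tau (USig lam p l I0 z)"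
    by (simp add: USig_tshift)
  show ?thesis
    unfolding L_def[symmetric]
    by (intro conjI lipschitz contraction maps_ball ESP solution image continuous_on_USig
        time_invariant)
qed

end
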